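(* Let $c_0>0$, $c>0$, $d\in\mathbb Z^+$, and let $\boldsymbol\beta=(\beta_j)_{j\ge1}$ be a sequence of non-negative reals and $(\Upsilon_{\boldsymbol\nu})_{\boldsymbol\nu\in\mathscr F}$ non-negative reals with $\Upsilon_{\boldsymbol 0}\le c_0$ and, for all $\boldsymbol\nu\in\mathscr F$, $$\Upsilon_{\boldsymbol\nu}\le\sum_{\boldsymbol m\le\boldsymbol\nu,\,\boldsymbol m\ne\boldsymbol\nu}\binom{\boldsymbol\nu}{\boldsymbol m}\Upsilon_{\boldsymbol m}c^{|\boldsymbol\nu-\boldsymbol m|}\sum_{\boldsymbol\mu\le\boldsymbol\nu-\boldsymbol m}(|\boldsymbol\mu|+1)!\,\boldsymbol\mu!\,\boldsymbol\beta^{\boldsymbol\mu}\prod_{i\ge1}S(\nu_i-m_i,\mu_i)+c_0c^{|\boldsymbol\nu|}\sum_{\boldsymbol m\le\boldsymbol\nu}\frac{(|\boldsymbol m|+d)!}{d!}\boldsymbol\beta^{\boldsymbol m}\prod_{i\ge1}S(\nu_i,m_i).$$ Then for all $\boldsymbol\nu\in\mathscr F$, $$\Upsilon_{\boldsymbol\nu}\le c_0c^{|\boldsymbol\nu|}\sum_{\boldsymbol m\le\boldsymbol\nu}\mathbb P_{\boldsymbol m}\,\boldsymbol m!\,\boldsymbol\beta^{\boldsymbol m}\prod_{i\ge1}S(\nu_i,m_i),$$ where $\mathbb P_{\boldsymbol 0}:=1$ and $\mathbb P_{\boldsymbol m}:=\frac{(|\boldsymbol m|+d)!}{\boldsymbol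 m!\,d!}+\sum_{\boldsymbol w\le\boldsymbol m,\,\boldsymbol w\ne\boldsymbol m}\mathbb P_{\boldsymbol w}(|\boldsymbol m|-|\boldsymbol w|+1)!$ for $\boldsymbol m\ne\boldsymbol 0$. If the hypotheses hold with equality, so does the conclusion.
   Context: $\mathscr F$ is the set of finitely supported multi-indices in $\mathbb N_0^{\mathbb N}$; $|\boldsymbol\nu|=\sum\nu_j$, $\boldsymbol\nu!=\prod\nu_j!$, $\boldsymbol\beta^{\boldsymbol\nu}=\prod\beta_j^{\nu_j}$, componentwise order, $\binom{\boldsymbol\nu}{\boldsymbol m}=\prod_j\binom{\nu_j}{m_j}$. $S(n,m)=\frac1{m!}\sum_{j=0}^m(-1)^{m-j}\binom mj j^n$ (Stirling numbers of the second kind, $S(0,0)=1$). *)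

theory Defs
  imports "HOL-Analysis.Analysis" "HOL-Combinatorics.Stirling"
begin

type_synonym mindex = "nat \<Rightarrow> nat"

definition msupp :: "mindex \<Rightarrow> nat set" where
  "msupp \<nu> = {j. \<nu> j \<noteq> 0}"

definition mF :: "mindex set" where
  "mF = {\<nu>. finite (msupp \<nu>)}"

definition mzero :: mindex where "mzero = (\<lambda>_. 0)"

definition mabs :: "mindex \<Rightarrow> nat" where
  "mabs \<nu> = (\<Sum>j\<in>msupp \<nu>. \<nu> j)"

definition mfact :: "mindex \<Rightarrow> real" where
  "mfact \<nu> = (\<Prod>j\<in>msupp \<nu>. fact (\<nu> j))"

definition mpow :: "(nat \<Rightarrow> real) \<Rightarrow> mindex \<Rightarrow> real" where
  "mpow \<beta> \<nu> = (\<Prod>j\<in>msupp \<nu>. \<beta> j ^ \<nu> j)"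

text \<open>binomial coefficient of multi-indices; all factors outside msupp nu equal 1 when m \<le> nu\<close>
definition mbinom :: "mindex \<Rightarrow> mindex \<Rightarrow> real" where
  "mbinom \<nu> m = (\<Prod>j\<in>msupp \<nu>. real (\<nu> j choose m j))"

text \<open>prod over i of S(nu_i, m_i) (factors with nu_i = m_i = 0 equal S(0,0)=1)\<close>
definition mStir :: "mindex \<Rightarrow> mindex \<Rightarrow> real" where
  "mStir \<nu> m = (\<Prod>j\<in>msupp \<nu> \<union> msupp m. real (Stirling (\<nu> j) (m j)))"

fun Pfuel :: "nat \<Rightarrow> nat \<Rightarrow> mindex \<Rightarrow> real" where
  "Pfuel d 0 m = 0"
| "Pfuel d (Suc k) m =
     (if m = mzero then 1
      else fact (mabs m + d) / (mfact m * fact d)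
         + (\<Sum>w\<in>{w. w \<le> m \<and> w \<noteq> m}. Pfuel d k w * fact (mabs m - mabs w + 1)))"

definition PP :: "nat \<Rightarrow> mindex \<Rightarrow> real" where
  "PP d m = Pfuel d (Suc (mabs m)) m"

definition hypRHS :: "real \<Rightarrow> real \<Rightarrow> nat \<Rightarrow> (nat \<Rightarrow> real) \<Rightarrow> (mindex \<Rightarrow> real) \<Rightarrow> mindex \<Rightarrow> real" where
  "hypRHS c0 c d \<beta> \<Upsilon> \<nu> =
     (\<Sum>m\<in>{m. m \<le> \<nu> \<and> m \<noteq> \<nu>}. mbinom \<nu> m * \<Upsilon> m * c ^ mabs (\<nu> - m) *
        (\<Sum>\<mu>\<in>{\<mu>. \<mu> \<le> \<nu> - m}. fact (mabs \<mu> + 1) * mfact \<mu> * mpow \<beta> \<mu> * mStir (\<nu> - m) \<mu>))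
     + c0 * c ^ mabs \<nu> * (\<Sum>m\<in>{m. m \<le> \<nu>}. fact (mabs m + d) / fact d * mpow \<beta> m * mStir \<nu> m)"

definition concRHS :: "real \<Rightarrow> real \<Rightarrow> nat \<Rightarrow> (nat \<Rightarrow> real) \<Rightarrow> mindex \<Rightarrow> real" where
  "concRHS c0 c d \<beta> \<nu> =
     c0 * c ^ mabs \<nu> * (\<Sum>m\<in>{m. m \<le> \<nu>}. PP d m * mfact m * mpow \<beta> m * mStir \<nu> m)"

end

theory Submission
  imports Defs "HOL-Library.Function_Algebras"
begin

text \<open>
  Write \<open>Q\<^sub>\<nu> = \<Sum>\<^sub>m\<^sub>\<le>\<^sub>\<nu> P\<^sub>m m! \<beta>\<^sup>m S(\<nu>,m)\<close>, so that the claimed bound is \<open>c\<^sub>0 c\<^bsup>|\<nu>|\<^esup> Q\<^sub>\<nu>\<close>.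
  The heart of the matter is that this bound satisfies the recursive hypothesis with equality.
  After expanding \<open>Q\<^sub>m\<close> and the inner sum of the hypothesis, the sum over \<open>m\<close> collapses by the
  Stirling convolution \<open>\<Sum>\<^sub>k C(n,k) S(k,a) S(n-k,b) = C(a+b,a) S(n,a+b)\<close>, applied in every
  coordinate; regrouping by \<open>k = w + \<mu>\<close> and the defining recursion of \<open>P\<^sub>k\<close> then give
  \<open>Q\<^sub>\<nu> = \<Sum>\<^sub>m\<^sub><\<^sub>\<nu> C(\<nu>,m) Q\<^sub>m G\<^sub>\<nu>\<^sub>-\<^sub>m + H\<^sub>\<nu>\<close>. As the hypothesis is monotone in the values
  \<open>\<Upsilon>\<^sub>m\<close>, \<open>m < \<nu>\<close>, the theorem follows by induction on \<open>|\<nu>|\<close>.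
\<close>

section \<open>A convolution identity for Stirling numbers\<close>

lemma Stirling_Suc_left:
  "Stirling (Suc n) k = k * Stirling n k + (case k of 0 \<Rightarrow> 0 | Suc k' \<Rightarrow> Stirling n k')"
  by (cases k) auto

definition Stirling_conv :: "nat \<Rightarrow> nat \<Rightarrow> nat \<Rightarrow> nat" where
  "Stirling_conv n a b = (\<Sum>k\<le>n. (n choose k) * Stirling k a * Stirling (n - k) b)"

lemma Stirling_conv_Suc:
  "Stirling_conv (Suc n) a b =
     (\<Sum>k\<le>n. (n choose k) * Stirling k a * Stirling (Suc (n - k)) b)
   + (\<Sum>k\<le>n. (n choose k) * Stirling (Suc k) a * Stirling (n - k) b)"
proof -
  define f where "f k = Stirling k a * Stirling (Suc n - k) b" for k
  have "Stirling_conv (Suc n) a b = (\<Sum>k\<le>Suc n. (Suc n choose k) * f k)"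
    unfolding Stirling_conv_def f_def by (simp add: mult.assoc)
  also have "\<dots> = f 0 + (\<Sum>k\<le>n. (n choose Suc k) * f (Suc k)) + (\<Sum>k\<le>n. (n choose k) * f (Suc k))"
    by (subst sum.atMost_Suc_shift) (simp add: algebra_simps sum.distrib)
  also have "f 0 + (\<Sum>k\<le>n. (n choose Suc k) * f (Suc k)) = (\<Sum>k\<le>Suc n. (n choose k) * f k)"
    by (simp only: sum.atMost_Suc_shift) simp
  also have "\<dots> = (\<Sum>k\<le>n. (n choose k) * f k)"
    by (simp only: sum.atMost_Suc) simp
  also have "\<dots> = (\<Sum>k\<le>n. (n choose k) * Stirling k a * Stirling (Suc (n - k)) b)"
    unfolding f_def by (intro sum.cong) (auto simp: Suc_diff_le mult.assoc)
  also have "(\<Sum>k\<le>n. (n choose k) * f (Suc k)) =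
      (\<Sum>k\<le>n. (n choose k) * Stirling (Suc k) a * Stirling (n - k) b)"
    unfolding f_def by (simp add: mult.assoc)
  finally show ?thesis .
qed

lemma Stirling_conv_rec:
  "Stirling_conv (Suc n) a b = (a + b) * Stirling_conv n a b
     + (case b of 0 \<Rightarrow> 0 | Suc b' \<Rightarrow> Stirling_conv n a b')
     + (case a of 0 \<Rightarrow> 0 | Suc a' \<Rightarrow> Stirling_conv n a' b)"
  unfolding Stirling_conv_Suc Stirling_Suc_left
  by (cases a; cases b) (simp_all add: Stirling_conv_def algebra_simps sum.distrib sum_distrib_left)

lemma Stirling_conv_eq: "Stirling_conv n a b = ((a + b) choose a) * Stirling n (a + b)"
proof (induction n arbitrary: a b)
  case 0
  then show ?case by (cases a; cases b) (auto simp: Stirling_conv_def)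
next
  case (Suc n)
  show ?case
  proof (cases a; cases b)
    assume "a = 0" "b = 0" then show ?thesis by (simp add: Stirling_conv_rec Suc)
  next
    fix b' assume "a = 0" "b = Suc b'" then show ?thesis by (simp add: Stirling_conv_rec Suc)
  next
    fix a' assume "a = Suc a'" "b = 0" then show ?thesis by (simp add: Stirling_conv_rec Suc)
  next
    fix a' b' assume ab: "a = Suc a'" "b = Suc b'"
    have "(Suc a' + b' choose Suc a') + (a' + Suc b' choose a') = (Suc a' + Suc b' choose Suc a')"
      by simp
    then show ?thesis using ab by (simp add: Stirling_conv_rec Suc algebra_simps)
  qed
qed

section \<open>Multi-indices\<close>

lemma msupp_mono:
  assumes "m \<le> \<nu>"
  shows "msupp m \<subseteq> msupp \<nu>"
proof
  fix j assume "j \<in> msupp m"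
  moreover have "m j \<le> \<nu> j" using assms by (rule le_funD)
  ultimately show "j \<in> msupp \<nu>" by (simp add: msupp_def)
qed

lemma mF_downward_closed: "\<nu> \<in> mF \<Longrightarrow> m \<le> \<nu> \<Longrightarrow> m \<in> mF"
  unfolding mF_def using msupp_mono finite_subset by blast

lemma mF_add: "w \<in> mF \<Longrightarrow> \<mu> \<in> mF \<Longrightarrow> w + \<mu> \<in> mF"
proof -
  assume "w \<in> mF" "\<mu> \<in> mF"
  moreover have "msupp (w + \<mu>) \<subseteq> msupp w \<union> msupp \<mu>" by (auto simp: msupp_def)
  ultimately show ?thesis unfolding mF_def by (auto intro: finite_subset)
qed

lemma msupp_mzero [simp]: "msupp mzero = {}"
  by (simp add: msupp_def mzero_def)

lemma le_mzero_iff: "w \<le> mzero \<longleftrightarrow> w = mzero"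
  by (auto simp: le_fun_def mzero_def fun_eq_iff)

lemma mabs_mzero [simp]: "mabs mzero = 0" by (simp add: mabs_def)
lemma mfact_mzero [simp]: "mfact mzero = 1" by (simp add: mfact_def)
lemma mpow_mzero [simp]: "mpow \<beta> mzero = 1" by (simp add: mpow_def)
lemma mStir_mzero_mzero [simp]: "mStir mzero mzero = 1" by (simp add: mStir_def)
lemma mbinom_self [simp]: "mbinom \<nu> \<nu> = 1" by (simp add: mbinom_def)

lemma mfact_pos: "mfact m > 0"
  unfolding mfact_def by (intro prod_pos) auto

lemma mbinom_nonneg: "mbinom \<nu> m \<ge> 0"
  unfolding mbinom_def by (intro prod_nonneg) auto

lemma mabs_eq_sum: "finite J \<Longrightarrow> msupp m \<subseteq> J \<Longrightarrow> mabs m = (\<Sum>j\<in>J. m j)"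
  unfolding mabs_def by (rule sum.mono_neutral_left) (auto simp: msupp_def)

lemma mfact_eq_prod: "finite J \<Longrightarrow> msupp m \<subseteq> J \<Longrightarrow> mfact m = (\<Prod>j\<in>J. fact (m j))"
  unfolding mfact_def by (rule prod.mono_neutral_left) (auto simp: msupp_def)

lemma mpow_eq_prod: "finite J \<Longrightarrow> msupp m \<subseteq> J \<Longrightarrow> mpow \<beta> m = (\<Prod>j\<in>J. \<beta> j ^ m j)"
  unfolding mpow_def by (rule prod.mono_neutral_left) (auto simp: msupp_def)

lemma mStir_eq_prod:
  "finite J \<Longrightarrow> msupp \<nu> \<subseteq> J \<Longrightarrow> msupp m \<subseteq> J \<Longrightarrow>
     mStir \<nu> m = (\<Prod>j\<in>J. real (Stirling (\<nu> j) (m j)))"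
  unfolding mStir_def by (rule prod.mono_neutral_left) (auto simp: msupp_def)

lemma mbinom_eq_prod:
  assumes "finite J" "msupp \<nu> \<subseteq> J" "m \<le> \<nu>"
  shows "mbinom \<nu> m = (\<Prod>j\<in>J. real (\<nu> j choose m j))"
proof -
  have "m j = 0" if "\<nu> j = 0" for j using assms(3) that by (auto simp: le_fun_def dest: spec[of _ j])
  then show ?thesis
    unfolding mbinom_def by (intro prod.mono_neutral_left) (use assms in \<open>auto simp: msupp_def\<close>)
qed

lemma mpow_add: "w \<in> mF \<Longrightarrow> \<mu> \<in> mF \<Longrightarrow> mpow \<beta> w * mpow \<beta> \<mu> = mpow \<beta> (w + \<mu>)"
proof -
  assume "w \<in> mF" "\<mu> \<in> mF"
  then have J: "finite (msupp w \<union> msupp \<mu>)" by (simp add: mF_def)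
  have "msupp (w + \<mu>) \<subseteq> msupp w \<union> msupp \<mu>" by (auto simp: msupp_def)
  with J show ?thesis
    by (simp add: mpow_eq_prod[OF J] power_add prod.distrib)
qed

lemma mabs_diff:
  assumes "\<nu> \<in> mF" "m \<le> \<nu>"
  shows "mabs (\<nu> - m) = mabs \<nu> - mabs m" and "mabs m \<le> mabs \<nu>"
proof -
  let ?J = "msupp \<nu>"
  have J: "finite ?J" using assms by (simp add: mF_def)
  have sm: "msupp m \<subseteq> ?J" by (rule msupp_mono[OF assms(2)])
  have sd: "msupp (\<nu> - m) \<subseteq> ?J" by (auto simp: msupp_def)
  have le: "\<And>j. j \<in> ?J \<Longrightarrow> m j \<le> \<nu> j" using assms(2) by (auto simp: le_fun_def)
  show "mabs (\<nu> - m) = mabs \<nu> - mabs m"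
    using mabs_eq_sum[OF J sd] mabs_eq_sum[OF J sm] mabs_eq_sum[OF J subset_refl]
      sum_subtractf_nat[OF le] by simp
  show "mabs m \<le> mabs \<nu>"
    using mabs_eq_sum[OF J sm] mabs_eq_sum[OF J subset_refl] le by (simp add: sum_mono)
qed

lemma mabs_less:
  assumes "\<nu> \<in> mF" "m \<le> \<nu>" "m \<noteq> \<nu>"
  shows "mabs m < mabs \<nu>"
proof -
  let ?J = "msupp \<nu>"
  have J: "finite ?J" using assms by (simp add: mF_def)
  obtain j where "m j \<noteq> \<nu> j" using assms(3) by auto
  with assms(2) have j: "m j < \<nu> j" by (auto simp: le_fun_def dest: spec[of _ j])
  then have "j \<in> ?J" by (auto simp: msupp_def)
  with j assms(2) have "(\<Sum>j\<in>?J. m j) < (\<Sum>j\<in>?J. \<nu> j)"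
    by (intro sum_strict_mono_ex1[OF J]) (auto simp: le_fun_def)
  then show ?thesis
    using mabs_eq_sum[OF J msupp_mono[OF assms(2)]] mabs_eq_sum[OF J subset_refl] by simp
qed

lemma mF_induct [consumes 1, case_names less]:
  assumes "\<nu> \<in> mF"
    and "\<And>\<nu>. \<nu> \<in> mF \<Longrightarrow> (\<And>m. m \<le> \<nu> \<Longrightarrow> m \<noteq> \<nu> \<Longrightarrow> P m) \<Longrightarrow> P \<nu>"
  shows "P \<nu>"
  using assms(1)
proof (induction \<nu> rule: measure_induct_rule[of mabs])
  case (less \<nu>)
  then show ?case using assms(2) mabs_less mF_downward_closed by blast
qed

lemma mStir_eq_0:
  assumes "m \<in> mF" "w \<in> mF" "\<not> w \<le> m"
  shows "mStir m w = 0"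
proof -
  obtain j where j: "m j < w j" using assms(3) by (auto simp: le_fun_def not_le)
  then have "j \<in> msupp w" by (auto simp: msupp_def)
  moreover have "finite (msupp m \<union> msupp w)" using assms by (simp add: mF_def)
  ultimately show ?thesis
    unfolding mStir_def using j by (intro prod_zero) (auto intro!: bexI[of _ j])
qed

lemma finite_le_mF: "\<nu> \<in> mF \<Longrightarrow> finite {m. m \<le> \<nu>}"
proof -
  assume "\<nu> \<in> mF"
  then have J: "finite (msupp \<nu>)" by (simp add: mF_def)
  let ?ext = "\<lambda>g j. if j \<in> msupp \<nu> then g j else 0"
  have "{m. m \<le> \<nu>} \<subseteq> ?ext ` PiE (msupp \<nu>) (\<lambda>j. {..\<nu> j})"
  proof
    fix m assume m: "m \<in> {m. m \<le> \<nu>}"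
    then have "m = ?ext (restrict m (msupp \<nu>))"
      using msupp_mono[of m \<nu>] by (auto simp: fun_eq_iff msupp_def)
    moreover have "restrict m (msupp \<nu>) \<in> PiE (msupp \<nu>) (\<lambda>j. {..\<nu> j})"
      using m by (auto simp: le_fun_def)
    ultimately show "m \<in> ?ext ` PiE (msupp \<nu>) (\<lambda>j. {..\<nu> j})" by blast
  qed
  then show ?thesis using finite_PiE[OF J, of "\<lambda>j. {..\<nu> j}"] finite_subset by blast
qed

lemma sum_le_prod_eq_prod_sum:
  fixes f :: "nat \<Rightarrow> nat \<Rightarrow> real"
  assumes J: "finite J" "msupp \<nu> \<subseteq> J"
  shows "(\<Sum>m | m \<le> \<nu>. \<Prod>j\<in>J. f j (m j)) = (\<Prod>j\<in>J. \<Sum>k\<le>\<nu> j. f j k)"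
proof -
  have out: "m j = 0" if "m \<le> \<nu>" "j \<notin> J" for m j
    using msupp_mono[OF that(1)] J that unfolding msupp_def by auto
  have "(\<Prod>j\<in>J. \<Sum>k\<le>\<nu> j. f j k) = (\<Sum>g\<in>PiE J (\<lambda>j. {..\<nu> j}). \<Prod>j\<in>J. f j (g j))"
    by (rule prod_sum_PiE) (use J in auto)
  also have "\<dots> = (\<Sum>m | m \<le> \<nu>. \<Prod>j\<in>J. f j (m j))"
  proof (rule sum.reindex_bij_witness[where i="\<lambda>m. restrict m J"
        and j="\<lambda>g j. if j \<in> J then g j else 0"])
    fix g assume "g \<in> PiE J (\<lambda>j. {..\<nu> j})"
    then show "restrict (\<lambda>j. if j \<in> J then g j else 0) J = g"
      and "(\<lambda>j. if j \<in> J then g j else 0) \<in> {m. m \<le> \<nu>}"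
      by (auto simp: PiE_def Pi_def extensional_def le_fun_def fun_eq_iff)
    show "(\<Prod>j\<in>J. f j (if j \<in> J then g j else 0)) = (\<Prod>j\<in>J. f j (g j))"
      by (rule prod.cong) auto
  next
    fix m assume "m \<in> {m. m \<le> \<nu>}"
    then show "(\<lambda>j. if j \<in> J then restrict m J j else 0) = m"
      and "restrict m J \<in> PiE J (\<lambda>j. {..\<nu> j})"
      using out by (auto simp: fun_eq_iff le_fun_def)
  qed
  finally show ?thesis by simp
qed

lemma sum_le_mStir_extend:
  assumes "\<nu> \<in> mF" "\<rho> \<le> \<nu>"
  shows "(\<Sum>w | w \<le> \<rho>. F w * mStir \<rho> w) = (\<Sum>w | w \<le> \<nu>. F w * mStir \<rho> w)"
proof (rule sum.mono_neutral_left)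
  show "finite {w. w \<le> \<nu>}" by (rule finite_le_mF[OF assms(1)])
  show "{w. w \<le> \<rho>} \<subseteq> {w. w \<le> \<nu>}" using assms(2) order_trans by blast
  show "\<forall>w\<in>{w. w \<le> \<nu>} - {w. w \<le> \<rho>}. F w * mStir \<rho> w = 0"
  proof
    fix w assume "w \<in> {w. w \<le> \<nu>} - {w. w \<le> \<rho>}"
    then have "mStir \<rho> w = 0" using assms mF_downward_closed by (intro mStir_eq_0) auto
    then show "F w * mStir \<rho> w = 0" by simp
  qed
qed

lemma sum_le_pairs_reindex:
  assumes \<nu>: "\<nu> \<in> mF"
    and zero: "\<And>w \<mu>. w \<le> \<nu> \<Longrightarrow> \<mu> \<le> \<nu> \<Longrightarrow> \<not> w + \<mu> \<le> \<nu> \<Longrightarrow> g w \<mu> = (0::real)"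
  shows "(\<Sum>w | w \<le> \<nu>. \<Sum>\<mu> | \<mu> \<le> \<nu>. g w \<mu>) = (\<Sum>k | k \<le> \<nu>. \<Sum>w | w \<le> k. g w (k - w))"
proof -
  let ?B = "{m. m \<le> \<nu>}"
  let ?T = "{(w, \<mu>) \<in> ?B \<times> ?B. w + \<mu> \<le> \<nu>}"
  have fin: "finite ?B" by (rule finite_le_mF[OF \<nu>])
  have "(\<Sum>w\<in>?B. \<Sum>\<mu>\<in>?B. g w \<mu>) = (\<Sum>(w, \<mu>)\<in>?B \<times> ?B. g w \<mu>)"
    by (simp add: sum.cartesian_product)
  also have "\<dots> = (\<Sum>(w, \<mu>)\<in>?T. g w \<mu>)"
    by (rule sum.mono_neutral_right) (use fin zero in auto)
  also have "\<dots> = (\<Sum>(k, w)\<in>Sigma ?B (\<lambda>k. {w. w \<le> k}). g w (k - w))"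
  proof (rule sum.reindex_bij_witness[where i="\<lambda>(k, w). (w, k - w)" and j="\<lambda>(w, \<mu>). (w + \<mu>, w)"])
    fix p assume "p \<in> Sigma ?B (\<lambda>k. {w. w \<le> k})"
    then obtain k w where p: "p = (k, w)" "k \<le> \<nu>" "w \<le> k" by auto
    then have "w + (k - w) = k" by (auto simp: le_fun_def fun_eq_iff)
    moreover have "k - w \<le> \<nu>" using p by (auto simp: le_fun_def intro: le_trans[OF diff_le_self])
    ultimately show "(case (case p of (k, w) \<Rightarrow> (w, k - w)) of (w, \<mu>) \<Rightarrow> (w + \<mu>, w)) = p"
      and "(case p of (k, w) \<Rightarrow> (w, k - w)) \<in> ?T"
      using p order_trans by auto
  next
    fix q assume "q \<in> ?T"
    then obtain w \<mu> where q: "q = (w, \<mu>)" "w + \<mu> \<le> \<nu>" by auto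
    have "w \<le> w + \<mu>" by (simp add: le_fun_def)
    then show "(case (case q of (w, \<mu>) \<Rightarrow> (w + \<mu>, w)) of (k, w) \<Rightarrow> (w, k - w)) = q"
      and "(case q of (w, \<mu>) \<Rightarrow> (w + \<mu>, w)) \<in> Sigma ?B (\<lambda>k. {w. w \<le> k})"
      and "(case (case q of (w, \<mu>) \<Rightarrow> (w + \<mu>, w)) of (k, w) \<Rightarrow> g w (k - w)) = (case q of (w, \<mu>) \<Rightarrow> g w \<mu>)"
      using q by (auto simp: fun_eq_iff)
  qed
  also have "\<dots> = (\<Sum>k\<in>?B. \<Sum>w | w \<le> k. g w (k - w))"
    by (subst sum.Sigma) (use fin finite_le_mF mF_downward_closed[OF \<nu>] in auto)
  finally show ?thesis .
qed

declare Pfuel.simps [simp del]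

lemma Pfuel_eq_PP: "w \<in> mF \<Longrightarrow> mabs w < n \<Longrightarrow> Pfuel d n w = PP d w"
proof (induction n arbitrary: w rule: less_induct)
  case (less n)
  then obtain k where n: "n = Suc k" by (cases n) auto
  have below: "Pfuel d k v = PP d v" "Pfuel d (mabs w) v = PP d v"
    if "v \<le> w" "v \<noteq> w" for v
    using less mabs_less[OF less.prems(1) that] mF_downward_closed[OF less.prems(1) that(1)] n
    by auto
  have "Pfuel d n w = Pfuel d (Suc (mabs w)) w"
    unfolding n Pfuel.simps using below by (auto intro!: sum.cong)
  then show ?case by (simp add: PP_def)
qed

lemma PP_mzero [simp]: "PP d mzero = 1"
  by (simp add: PP_def Pfuel.simps)

lemma PP_rec:
  assumes "k \<in> mF" "k \<noteq> mzero"
  shows "PP d k = fact (mabs k + d) / (mfact k * fact d)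
    + (\<Sum>w | w \<le> k \<and> w \<noteq> k. PP d w * fact (mabs k - mabs w + 1))"
proof -
  have below: "Pfuel d (mabs k) w = PP d w" if "w \<le> k" "w \<noteq> k" for w
    using Pfuel_eq_PP mabs_less[OF assms(1) that] mF_downward_closed[OF assms(1) that(1)] by blast
  have "PP d k = fact (mabs k + d) / (mfact k * fact d)
    + (\<Sum>w | w \<le> k \<and> w \<noteq> k. Pfuel d (mabs k) w * fact (mabs k - mabs w + 1))"
    using assms(2) by (simp only: PP_def Pfuel.simps if_False)
  also have "\<dots> = fact (mabs k + d) / (mfact k * fact d)
    + (\<Sum>w | w \<le> k \<and> w \<noteq> k. PP d w * fact (mabs k - mabs w + 1))"
    using below by (auto intro!: sum.cong)
  finally show ?thesis .
qed

lemma mfact_mult_PP: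
  assumes "k \<in> mF"
  shows "mfact k * PP d k = fact (mabs k + d) / fact d
    + mfact k * (\<Sum>w | w \<le> k \<and> w \<noteq> k. PP d w * fact (mabs k - mabs w + 1))"
proof (cases "k = mzero")
  case True
  then show ?thesis by (simp add: le_mzero_iff)
next
  case False
  have "mfact k > 0" by (rule mfact_pos)
  then show ?thesis using PP_rec[OF assms False, of d] by (simp add: field_simps)
qed

section \<open>The coordinatewise Stirling convolution\<close>

lemma binomial_mult_fact: "real ((a + b) choose a) * fact a * fact b = fact (a + b)"
proof -
  have "fact a * fact (a + b - a) * ((a + b) choose a) = (fact (a + b) :: nat)"
    by (rule binomial_fact_lemma) simp
  then have "real (fact a * fact b * ((a + b) choose a)) = real (fact (a + b))" by simp
  then show ?thesis by (simp only: of_nat_mult of_nat_fact mult_ac)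
qed

lemma mStir_convolution:
  assumes \<nu>: "\<nu> \<in> mF" and "w \<le> \<nu>" "\<mu> \<le> \<nu>"
  shows "(\<Sum>m | m \<le> \<nu>. mbinom \<nu> m * mStir m w * mStir (\<nu> - m) \<mu>) * mfact w * mfact \<mu>
       = mfact (w + \<mu>) * mStir \<nu> (w + \<mu>)"
proof -
  let ?J = "msupp \<nu>"
  have J: "finite ?J" using \<nu> by (simp add: mF_def)
  have sw: "msupp w \<subseteq> ?J" and s\<mu>: "msupp \<mu> \<subseteq> ?J" using msupp_mono assms by auto
  then have swm: "msupp (w + \<mu>) \<subseteq> ?J" by (auto simp: msupp_def)
  have "(\<Sum>m | m \<le> \<nu>. mbinom \<nu> m * mStir m w * mStir (\<nu> - m) \<mu>)
      = (\<Sum>m | m \<le> \<nu>. \<Prod>j\<in>?J. real (\<nu> j choose m j) * real (Stirling (m j) (w j))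
                               * real (Stirling (\<nu> j - m j) (\<mu> j)))"
  proof (intro sum.cong refl)
    fix m assume m: "m \<in> {m. m \<le> \<nu>}"
    have "msupp m \<subseteq> ?J" using msupp_mono m by auto
    moreover have "msupp (\<nu> - m) \<subseteq> ?J" by (auto simp: msupp_def)
    ultimately show "mbinom \<nu> m * mStir m w * mStir (\<nu> - m) \<mu> = (\<Prod>j\<in>?J. real (\<nu> j choose m j)
        * real (Stirling (m j) (w j)) * real (Stirling (\<nu> j - m j) (\<mu> j)))"
      using m by (simp add: mbinom_eq_prod[OF J] mStir_eq_prod[OF J] sw s\<mu> prod.distrib)
  qed
  also have "\<dots> = (\<Prod>j\<in>?J. real (Stirling_conv (\<nu> j) (w j) (\<mu> j)))"
    using sum_le_prod_eq_prod_sum[OF J subset_refl, of "\<lambda>j k. real (\<nu> j choose k)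
        * real (Stirling k (w j)) * real (Stirling (\<nu> j - k) (\<mu> j))"]
    unfolding Stirling_conv_def by (simp add: mult.assoc)
  finally have conv: "(\<Sum>m | m \<le> \<nu>. mbinom \<nu> m * mStir m w * mStir (\<nu> - m) \<mu>)
      = (\<Prod>j\<in>?J. real (Stirling_conv (\<nu> j) (w j) (\<mu> j)))" .
  show ?thesis
    unfolding conv mfact_eq_prod[OF J sw] mfact_eq_prod[OF J s\<mu>] mfact_eq_prod[OF J swm]
      mStir_eq_prod[OF J subset_refl swm] prod.distrib[symmetric]
    by (intro prod.cong refl) (simp add: Stirling_conv_eq binomial_mult_fact[symmetric] mult_ac)
qed

section \<open>The recursion satisfied by the claimed bound\<close>

definition Qsum :: "nat \<Rightarrow> (nat \<Rightarrow> real) \<Rightarrow> mindex \<Rightarrow> real" where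
  "Qsum d \<beta> \<nu> = (\<Sum>m | m \<le> \<nu>. PP d m * mfact m * mpow \<beta> m * mStir \<nu> m)"

definition Gsum :: "(nat \<Rightarrow> real) \<Rightarrow> mindex \<Rightarrow> real" where
  "Gsum \<beta> \<rho> = (\<Sum>\<mu> | \<mu> \<le> \<rho>. fact (mabs \<mu> + 1) * mfact \<mu> * mpow \<beta> \<mu> * mStir \<rho> \<mu>)"

definition Hsum :: "nat \<Rightarrow> (nat \<Rightarrow> real) \<Rightarrow> mindex \<Rightarrow> real" where
  "Hsum d \<beta> \<nu> = (\<Sum>m | m \<le> \<nu>. fact (mabs m + d) / fact d * mpow \<beta> m * mStir \<nu> m)"

lemma concRHS_eq_Qsum: "concRHS c0 c d \<beta> \<nu> = c0 * c ^ mabs \<nu> * Qsum d \<beta> \<nu>"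
  unfolding concRHS_def Qsum_def ..

lemma hypRHS_eq:
  "hypRHS c0 c d \<beta> \<Upsilon> \<nu> =
     (\<Sum>m | m \<le> \<nu> \<and> m \<noteq> \<nu>. mbinom \<nu> m * \<Upsilon> m * c ^ mabs (\<nu> - m) * Gsum \<beta> (\<nu> - m))
     + c0 * c ^ mabs \<nu> * Hsum d \<beta> \<nu>"
  unfolding hypRHS_def Gsum_def Hsum_def ..

lemma Gsum_mzero [simp]: "Gsum \<beta> mzero = 1"
proof -
  have "{\<mu>. \<mu> \<le> mzero} = {mzero}" using le_mzero_iff by auto
  then show ?thesis unfolding Gsum_def by simp
qed

lemma Gsum_nonneg: "(\<And>j. \<beta> j \<ge> 0) \<Longrightarrow> Gsum \<beta> \<rho> \<ge> 0"
  unfolding Gsum_def mfact_def mpow_def mStir_def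
  by (intro sum_nonneg mult_nonneg_nonneg prod_nonneg) auto

lemma Qsum_Gsum_double_sum:
  assumes \<nu>: "\<nu> \<in> mF"
  shows "(\<Sum>m | m \<le> \<nu>. mbinom \<nu> m * Qsum d \<beta> m * Gsum \<beta> (\<nu> - m))
       = (\<Sum>w | w \<le> \<nu>. \<Sum>\<mu> | \<mu> \<le> \<nu>. PP d w * fact (mabs \<mu> + 1)
            * (mfact (w + \<mu>) * mpow \<beta> (w + \<mu>) * mStir \<nu> (w + \<mu>)))"
proof -
  let ?B = "{m. m \<le> \<nu>}"
  define A where "A w = PP d w * mfact w * mpow \<beta> w" for w
  define G where "G \<mu> = fact (mabs \<mu> + 1) * mfact \<mu> * mpow \<beta> \<mu>" for \<mu>
  have "(\<Sum>m\<in>?B. mbinom \<nu> m * Qsum d \<beta> m * Gsum \<beta> (\<nu> - m))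
      = (\<Sum>m\<in>?B. \<Sum>w\<in>?B. \<Sum>\<mu>\<in>?B. mbinom \<nu> m * (A w * mStir m w) * (G \<mu> * mStir (\<nu> - m) \<mu>))"
  proof (intro sum.cong refl)
    fix m assume m: "m \<in> ?B"
    have Q: "Qsum d \<beta> m = (\<Sum>w\<in>?B. A w * mStir m w)"
      unfolding Qsum_def A_def by (rule sum_le_mStir_extend[OF \<nu>]) (use m in auto)
    have G: "Gsum \<beta> (\<nu> - m) = (\<Sum>\<mu>\<in>?B. G \<mu> * mStir (\<nu> - m) \<mu>)"
      unfolding Gsum_def G_def by (rule sum_le_mStir_extend[OF \<nu>]) (auto simp: le_fun_def)
    have "(\<Sum>w\<in>?B. \<Sum>\<mu>\<in>?B. mbinom \<nu> m * (A w * mStir m w) * (G \<mu> * mStir (\<nu> - m) \<mu>))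
        = (\<Sum>w\<in>?B. mbinom \<nu> m * (A w * mStir m w)) * (\<Sum>\<mu>\<in>?B. G \<mu> * mStir (\<nu> - m) \<mu>)"
      by (rule sum_product[symmetric])
    then show "mbinom \<nu> m * Qsum d \<beta> m * Gsum \<beta> (\<nu> - m)
        = (\<Sum>w\<in>?B. \<Sum>\<mu>\<in>?B. mbinom \<nu> m * (A w * mStir m w) * (G \<mu> * mStir (\<nu> - m) \<mu>))"
      by (simp add: Q G flip: sum_distrib_left)
  qed
  also have "\<dots> = (\<Sum>w\<in>?B. \<Sum>\<mu>\<in>?B. \<Sum>m\<in>?B.
      mbinom \<nu> m * (A w * mStir m w) * (G \<mu> * mStir (\<nu> - m) \<mu>))"
    by (subst sum.swap) (rule sum.cong[OF refl], rule sum.swap)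
  also have "\<dots> = (\<Sum>w\<in>?B. \<Sum>\<mu>\<in>?B. PP d w * fact (mabs \<mu> + 1)
            * (mfact (w + \<mu>) * mpow \<beta> (w + \<mu>) * mStir \<nu> (w + \<mu>)))"
  proof (intro sum.cong refl)
    fix w \<mu> assume w: "w \<in> ?B" and \<mu>: "\<mu> \<in> ?B"
    have "(\<Sum>m\<in>?B. mbinom \<nu> m * (A w * mStir m w) * (G \<mu> * mStir (\<nu> - m) \<mu>))
       = PP d w * fact (mabs \<mu> + 1) * (mpow \<beta> w * mpow \<beta> \<mu>)
         * ((\<Sum>m\<in>?B. mbinom \<nu> m * mStir m w * mStir (\<nu> - m) \<mu>) * mfact w * mfact \<mu>)"
      unfolding A_def G_def sum_distrib_left sum_distrib_right by (intro sum.cong refl) (simp add: ac_simps)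
    also have "\<dots> = PP d w * fact (mabs \<mu> + 1) * mpow \<beta> (w + \<mu>) * (mfact (w + \<mu>) * mStir \<nu> (w + \<mu>))"
      using w \<mu> mF_downward_closed[OF \<nu>]
      by (simp only: mStir_convolution[OF \<nu>] mpow_add mem_Collect_eq)
    finally show "(\<Sum>m\<in>?B. mbinom \<nu> m * (A w * mStir m w) * (G \<mu> * mStir (\<nu> - m) \<mu>))
       = PP d w * fact (mabs \<mu> + 1) * (mfact (w + \<mu>) * mpow \<beta> (w + \<mu>) * mStir \<nu> (w + \<mu>))"
      by (simp only: mult_ac)
  qed
  finally show ?thesis .
qed

lemma Qsum_Gsum_convolution:
  assumes \<nu>: "\<nu> \<in> mF"
  shows "(\<Sum>m | m \<le> \<nu>. mbinom \<nu> m * Qsum d \<beta> m * Gsum \<beta> (\<nu> - m))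
       = (\<Sum>k | k \<le> \<nu>. mfact k * mpow \<beta> k * mStir \<nu> k
            * (\<Sum>w | w \<le> k. PP d w * fact (mabs k - mabs w + 1)))"
proof -
  define g where "g w \<mu> = PP d w * fact (mabs \<mu> + 1)
    * (mfact (w + \<mu>) * mpow \<beta> (w + \<mu>) * mStir \<nu> (w + \<mu>))" for w \<mu>
  have "(\<Sum>w | w \<le> \<nu>. \<Sum>\<mu> | \<mu> \<le> \<nu>. g w \<mu>) = (\<Sum>k | k \<le> \<nu>. \<Sum>w | w \<le> k. g w (k - w))"
  proof (rule sum_le_pairs_reindex[OF \<nu>])
    fix w \<mu> assume "w \<le> \<nu>" "\<mu> \<le> \<nu>" "\<not> w + \<mu> \<le> \<nu>"
    then have "mStir \<nu> (w + \<mu>) = 0"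
      using \<nu> mF_add mF_downward_closed by (intro mStir_eq_0) auto
    then show "g w \<mu> = 0" by (simp add: g_def)
  qed
  also have "\<dots> = (\<Sum>k | k \<le> \<nu>. mfact k * mpow \<beta> k * mStir \<nu> k
            * (\<Sum>w | w \<le> k. PP d w * fact (mabs k - mabs w + 1)))"
  proof (intro sum.cong refl)
    fix k assume "k \<in> {k. k \<le> \<nu>}"
    then have k: "k \<in> mF" using mF_downward_closed[OF \<nu>] by auto
    have "w + (k - w) = k" if "w \<le> k" for w using that by (auto simp: le_fun_def fun_eq_iff)
    then show "(\<Sum>w | w \<le> k. g w (k - w))
      = mfact k * mpow \<beta> k * mStir \<nu> k * (\<Sum>w | w \<le> k. PP d w * fact (mabs k - mabs w + 1))"
      unfolding g_def sum_distrib_left by (intro sum.cong refl) (simp add: mabs_diff(1)[OF k] ac_simps)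
  qed
  finally show ?thesis
    unfolding Qsum_Gsum_double_sum[OF \<nu>] g_def .
qed

lemma Qsum_rec:
  assumes \<nu>: "\<nu> \<in> mF"
  shows "Qsum d \<beta> \<nu> =
    (\<Sum>m | m \<le> \<nu> \<and> m \<noteq> \<nu>. mbinom \<nu> m * Qsum d \<beta> m * Gsum \<beta> (\<nu> - m)) + Hsum d \<beta> \<nu>"
proof -
  let ?T = "\<Sum>m | m \<le> \<nu>. mbinom \<nu> m * Qsum d \<beta> m * Gsum \<beta> (\<nu> - m)"
  have split: "{m. m \<le> k} = insert k {m. m \<le> k \<and> m \<noteq> k}" for k :: mindex by auto
  have "\<nu> - \<nu> = mzero" by (simp add: fun_eq_iff mzero_def)
  then have "Gsum \<beta> (\<nu> - \<nu>) = 1" by (simp only: Gsum_mzero)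
  then have "?T = (\<Sum>m | m \<le> \<nu> \<and> m \<noteq> \<nu>. mbinom \<nu> m * Qsum d \<beta> m * Gsum \<beta> (\<nu> - m)) + Qsum d \<beta> \<nu>"
    using finite_le_mF[OF \<nu>] by (subst split, subst sum.insert) auto
  \<comment> \<open>By the convolution and the recursion of \<open>PP\<close>, the full sum \<open>?T\<close> is \<open>2 Q - H\<close>.\<close>
  moreover have "?T + Hsum d \<beta> \<nu> = 2 * Qsum d \<beta> \<nu>"
  proof -
    let ?R = "\<lambda>k. \<Sum>w | w \<le> k. PP d w * fact (mabs k - mabs w + 1)"
    have per_k: "mfact k * mpow \<beta> k * mStir \<nu> k * ?R k + fact (mabs k + d) / fact d * mpow \<beta> k * mStir \<nu> k
      = 2 * (PP d k * mfact k * mpow \<beta> k * mStir \<nu> k)" if "k \<le> \<nu>" for k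
    proof -
      have k: "k \<in> mF" using mF_downward_closed[OF \<nu> that] .
      have "?R k = PP d k + (\<Sum>w | w \<le> k \<and> w \<noteq> k. PP d w * fact (mabs k - mabs w + 1))"
        using finite_le_mF[OF k] by (subst split, subst sum.insert) auto
      then have PP_k: "mfact k * ?R k + fact (mabs k + d) / fact d = 2 * (PP d k * mfact k)"
        using mfact_mult_PP[OF k, of d] by (simp add: algebra_simps)
      have "mfact k * mpow \<beta> k * mStir \<nu> k * ?R k + fact (mabs k + d) / fact d * mpow \<beta> k * mStir \<nu> k
        = (mfact k * ?R k + fact (mabs k + d) / fact d) * (mpow \<beta> k * mStir \<nu> k)"
        by (simp only: algebra_simps)
      also have "\<dots> = 2 * (PP d k * mfact k * mpow \<beta> k * mStir \<nu> k)"
        by (simp only: PP_k mult_ac)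
      finally show ?thesis .
    qed
    have "?T + Hsum d \<beta> \<nu> = (\<Sum>k | k \<le> \<nu>. mfact k * mpow \<beta> k * mStir \<nu> k * ?R k
        + fact (mabs k + d) / fact d * mpow \<beta> k * mStir \<nu> k)"
      unfolding Qsum_Gsum_convolution[OF \<nu>] Hsum_def by (rule sum.distrib[symmetric])
    also have "\<dots> = (\<Sum>k | k \<le> \<nu>. 2 * (PP d k * mfact k * mpow \<beta> k * mStir \<nu> k))"
      using per_k by (intro sum.cong) auto
    also have "\<dots> = 2 * Qsum d \<beta> \<nu>"
      unfolding Qsum_def by (rule sum_distrib_left[symmetric])
    finally show ?thesis .
  qed
  ultimately show ?thesis by linarith
qed

lemma concRHS_fixpoint:
  assumes \<nu>: "\<nu> \<in> mF"
  shows "hypRHS c0 c d \<beta> (concRHS c0 c d \<beta>) \<nu> = concRHS c0 c d \<beta> \<nu>"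
proof -
  have "(\<Sum>m | m \<le> \<nu> \<and> m \<noteq> \<nu>. mbinom \<nu> m * concRHS c0 c d \<beta> m * c ^ mabs (\<nu> - m) * Gsum \<beta> (\<nu> - m))
      = c0 * c ^ mabs \<nu> * (\<Sum>m | m \<le> \<nu> \<and> m \<noteq> \<nu>. mbinom \<nu> m * Qsum d \<beta> m * Gsum \<beta> (\<nu> - m))"
    unfolding sum_distrib_left
  proof (intro sum.cong refl)
    fix m assume "m \<in> {m. m \<le> \<nu> \<and> m \<noteq> \<nu>}"
    then have "c ^ mabs m * c ^ mabs (\<nu> - m) = c ^ mabs \<nu>"
      using mabs_diff[OF \<nu>] by (simp flip: power_add)
    then show "mbinom \<nu> m * concRHS c0 c d \<beta> m * c ^ mabs (\<nu> - m) * Gsum \<beta> (\<nu> - m)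
      = c0 * c ^ mabs \<nu> * (mbinom \<nu> m * Qsum d \<beta> m * Gsum \<beta> (\<nu> - m))"
      unfolding concRHS_eq_Qsum by (simp flip: mult.assoc)
  qed
  then show ?thesis
    unfolding hypRHS_eq concRHS_eq_Qsum Qsum_rec[OF \<nu>, of d \<beta>] by (simp add: distrib_left)
qed

lemma hypRHS_mono:
  assumes "c \<ge> 0" "\<And>j. \<beta> j \<ge> 0" "\<And>m. m \<le> \<nu> \<Longrightarrow> m \<noteq> \<nu> \<Longrightarrow> \<Upsilon> m \<le> \<Upsilon>' m"
  shows "hypRHS c0 c d \<beta> \<Upsilon> \<nu> \<le> hypRHS c0 c d \<beta> \<Upsilon>' \<nu>"
  unfolding hypRHS_eq
  using assms Gsum_nonneg[of \<beta>] mbinom_nonneg[of \<nu>]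
  by (intro add_right_mono sum_mono mult_right_mono mult_left_mono) auto

lemma hypRHS_cong:
  assumes "\<And>m. m \<le> \<nu> \<Longrightarrow> m \<noteq> \<nu> \<Longrightarrow> \<Upsilon> m = \<Upsilon>' m"
  shows "hypRHS c0 c d \<beta> \<Upsilon> \<nu> = hypRHS c0 c d \<beta> \<Upsilon>' \<nu>"
  unfolding hypRHS_eq using assms by (auto intro!: sum.cong)

theorem lemmaA5:
  fixes c0 c :: real and d :: nat and \<beta> :: "nat \<Rightarrow> real" and \<Upsilon> :: "mindex \<Rightarrow> real"
  assumes "c0 > 0" and "c > 0" and "d \<ge> 1"
    and "\<And>j. \<beta> j \<ge> 0"
    and "\<And>\<nu>. \<nu> \<in> mF \<Longrightarrow> \<Upsilon> \<nu> \<ge> 0"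
  shows "(\<Upsilon> mzero \<le> c0 \<and> (\<forall>\<nu>\<in>mF. \<Upsilon> \<nu> \<le> hypRHS c0 c d \<beta> \<Upsilon> \<nu>)
           \<longrightarrow> (\<forall>\<nu>\<in>mF. \<Upsilon> \<nu> \<le> concRHS c0 c d \<beta> \<nu>))
       \<and> (\<Upsilon> mzero = c0 \<and> (\<forall>\<nu>\<in>mF. \<Upsilon> \<nu> = hypRHS c0 c d \<beta> \<Upsilon> \<nu>)
           \<longrightarrow> (\<forall>\<nu>\<in>mF. \<Upsilon> \<nu> = concRHS c0 c d \<beta> \<nu>))"
proof (intro conjI impI ballI)
  fix \<nu> assume H: "\<Upsilon> mzero \<le> c0 \<and> (\<forall>\<nu>\<in>mF. \<Upsilon> \<nu> \<le> hypRHS c0 c d \<beta> \<Upsilon> \<nu>)" and "\<nu> \<in> mF"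
  from \<open>\<nu> \<in> mF\<close> show "\<Upsilon> \<nu> \<le> concRHS c0 c d \<beta> \<nu>"
  proof (induction rule: mF_induct)
    case (less \<nu>)
    have "\<Upsilon> \<nu> \<le> hypRHS c0 c d \<beta> \<Upsilon> \<nu>" using H less.hyps by blast
    also have "\<dots> \<le> hypRHS c0 c d \<beta> (concRHS c0 c d \<beta>) \<nu>"
      using assms(2,4) less.IH by (intro hypRHS_mono) auto
    finally show ?case using concRHS_fixpoint[OF less.hyps] by simp
  qed
next
  fix \<nu> assume H: "\<Upsilon> mzero = c0 \<and> (\<forall>\<nu>\<in>mF. \<Upsilon> \<nu> = hypRHS c0 c d \<beta> \<Upsilon> \<nu>)" and "\<nu> \<in> mF"
  from \<open>\<nu> \<in> mF\<close> show "\<Upsilon> \<nu> = concRHS c0 c d \<beta> \<nu>"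
  proof (induction rule: mF_induct)
    case (less \<nu>)
    have "\<Upsilon> \<nu> = hypRHS c0 c d \<beta> \<Upsilon> \<nu>" using H less.hyps by blast
    also have "\<dots> = hypRHS c0 c d \<beta> (concRHS c0 c d \<beta>) \<nu>"
      using less.IH by (intro hypRHS_cong) auto
    finally show ?case using concRHS_fixpoint[OF less.hyps] by simp
  qed
qed

end
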